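(* Let $\Gamma=(\gamma_{i,j})\in\mathcal{M}_n(\mathbb{R})$ be symmetric with entries in $[0,1]$, zero diagonal, and at least one strictly positive off-diagonal entry in each row. Let $\boldsymbol{\eta}=\Gamma\mathbf{1}_n$, $L=\operatorname{diag}(\boldsymbol{\eta})-\Gamma$, let $\lambda,\mu>0$, and $A=(a_{i,j})=\lambda\mathsf{I}_n+\mu L$. Define $\mathsf{P}_a\coloneqq\lambda\mathsf{I}_n+\mu\operatorname{diag}(\boldsymbol{\eta})$ and $\mathsf{P}_b\coloneqq\operatorname{diag}\big([\sum_{j=1}^n a_{i,j}^2]^{1/2}\big)_{i=1,\dots,n}$. Then every eigenvalue $\theta$ of $\mathsf{P}_b^{-1}A$ satisfies \[ 2^{-1/2}\,\lambda_{\min}(\mathsf{P}_a^{-1}A)\le\theta\le\lambda_{\max}(\mathsf{P}_a^{-1}A). \]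
   Context: $\mathbf{1}_n$ is the all-ones vector and $\mathsf{I}_n$ the identity. $\lambda_{\min}(M)$ and $\lambda_{\max}(M)$ denote the smallest and largest eigenvalues of $M$ (the matrices $\mathsf{P}^{-1}A$ here are similar to symmetric positive definite matrices, so their eigenvalues are real and positive). *)

theory Defs
  imports "HOL-Analysis.Analysis"
begin

definition diagm :: "real ^ 'n \<Rightarrow> real ^ 'n ^ 'n" where
  "diagm v = (\<chi> i j. if i = j then v $ i else 0)"

definition cmat :: "real ^ 'n ^ 'n \<Rightarrow> complex ^ 'n ^ 'n" where
  "cmat M = (\<chi> i j. complex_of_real (M $ i $ j))"

definition is_eigenvalue :: "real ^ 'n ^ 'n \<Rightarrow> complex \<Rightarrow> bool" where
  "is_eigenvalue M \<theta> \<longleftrightarrow> (\<exists>v :: complex ^ 'n. v \<noteq> 0 \<and> cmat M *v v = \<theta> *s v)"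

text \<open>Smallest / largest eigenvalue, for matrices with real spectrum.\<close>
definition lambda_min :: "real ^ 'n ^ 'n \<Rightarrow> real" where
  "lambda_min M = Min {t :: real. is_eigenvalue M (complex_of_real t)}"

definition lambda_max :: "real ^ 'n ^ 'n \<Rightarrow> real" where
  "lambda_max M = Max {t :: real. is_eigenvalue M (complex_of_real t)}"

end

theory Submission
  imports Defs
begin

(*
  For symmetric A and a positive diagonal D, the complex eigenvector equation A v = theta D v
  splits into real and imaginary parts, and symmetry forces theta to be real with a real
  eigenvector w, so theta = (w . A w) / (w . D w). The extreme eigenvalues of D^-1 A are the
  extreme values of this generalized Rayleigh quotient (a minimiser on the unit sphere is an
  eigenvector). Hence, if A is positive semidefinite and D <= D' <= c D entrywise, every
  eigenvalue of D'^-1 A lies in [lambda_min (D^-1 A) / c, lambda_max (D^-1 A)].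
  Here A = lam I + mu L is positive semidefinite because the graph Laplacian L is, and with
  D = Pa, D' = Pb one has a_i <= |row i of A| <= sqrt 2 * a_i, where a_i = lam + mu eta_i:
  the off-diagonal entries of row i have total size mu eta_i <= a_i.
*)

lemma matrix_inv_eqI:
  fixes A :: "'a::semiring_1^'n^'m" and B :: "'a^'m^'n"
  assumes "A ** B = mat 1" and "B ** A = mat 1"
  shows "matrix_inv A = B"
proof -
  have inv: "A ** matrix_inv A = mat 1 \<and> matrix_inv A ** A = mat 1"
    unfolding matrix_inv_def by (rule someI[of _ B]) (use assms in auto)
  have "matrix_inv A = (B ** A) ** matrix_inv A" using assms by simp
  also have "\<dots> = B" using inv by (simp add: matrix_mul_assoc[symmetric])
  finally show ?thesis .
qed

lemma if_0_mult: "(if P then a else 0) * b = (if P then a * b else (0::'a::mult_zero))"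
  by simp

lemma mult_if_0: "b * (if P then a else 0) = (if P then b * a else (0::'a::mult_zero))"
  by simp

lemma diagm_mult_diagm: "diagm d ** diagm e = diagm (\<chi> i. d$i * e$i)"
  by (simp add: matrix_matrix_mult_def diagm_def vec_eq_iff if_0_mult mult_if_0)

lemma matrix_inv_diagm:
  assumes "\<And>i. d$i \<noteq> 0"
  shows "matrix_inv (diagm d) = diagm (\<chi> i. 1 / d$i)"
  by (rule matrix_inv_eqI; simp add: diagm_mult_diagm assms; simp add: diagm_def mat_def vec_eq_iff)

lemma diagm_vector_mult: "diagm d *v x = (\<chi> i. d$i * x$i)"
  by (simp add: matrix_vector_mult_def diagm_def vec_eq_iff if_0_mult mult_if_0)

lemma transpose_diagm [simp]: "transpose (diagm d) = diagm d"
  by (simp add: transpose_def diagm_def vec_eq_iff)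

lemma quadratic_diagm: "x \<bullet> (diagm d *v x) = (\<Sum>i\<in>UNIV. d$i * (x$i)\<^sup>2)"
  by (simp add: diagm_vector_mult inner_vec_def power2_eq_square mult_ac)

lemma quadratic_diagm_nonneg:
  assumes "\<And>i. 0 \<le> d$i"
  shows "0 \<le> x \<bullet> (diagm d *v x)"
  unfolding quadratic_diagm by (simp add: assms sum_nonneg)

lemma quadratic_diagm_pos:
  assumes "\<And>i. 0 < d$i" and "x \<noteq> 0"
  shows "0 < x \<bullet> (diagm d *v x)"
proof -
  obtain k where "x$k \<noteq> 0" using assms(2) by (auto simp: vec_eq_iff)
  then have "0 < d$k * (x$k)\<^sup>2" using assms(1) by simp
  also have "\<dots> \<le> (\<Sum>i\<in>UNIV. d$i * (x$i)\<^sup>2)"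
    by (rule member_le_sum) (auto intro: mult_nonneg_nonneg less_imp_le[OF assms(1)])
  finally show ?thesis by (simp add: quadratic_diagm)
qed

lemma quadratic_diagm_mono:
  assumes "\<And>i. d$i \<le> e$i"
  shows "x \<bullet> (diagm d *v x) \<le> x \<bullet> (diagm e *v x)"
  unfolding quadratic_diagm by (intro sum_mono mult_right_mono assms) simp

lemma inner_matrix_vector_symmetric:
  fixes A :: "real^'n^'n"
  assumes "transpose A = A"
  shows "x \<bullet> (A *v y) = y \<bullet> (A *v x)"
  by (metis assms dot_lmul_matrix inner_commute transpose_matrix_vector)

lemma cmat_mult_of_real_vector:
  "cmat A *v (\<chi> i. of_real (w$i)) = (\<chi> i. of_real ((A *v w)$i))"
  by (simp add: cmat_def matrix_vector_mult_def vec_eq_iff)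

lemma Re_cmat_mult_vector: "(\<chi> i. Re ((cmat A *v v)$i)) = A *v (\<chi> i. Re (v$i))"
  by (simp add: cmat_def matrix_vector_mult_def vec_eq_iff Re_sum)

lemma Im_cmat_mult_vector: "(\<chi> i. Im ((cmat A *v v)$i)) = A *v (\<chi> i. Im (v$i))"
  by (simp add: cmat_def matrix_vector_mult_def vec_eq_iff Im_sum)

lemma is_eigenvalue_diagm_inv_iff:
  assumes d: "\<And>i. d$i \<noteq> 0"
  shows "is_eigenvalue (matrix_inv (diagm d) ** A) \<theta> \<longleftrightarrow>
    (\<exists>v. v \<noteq> 0 \<and> cmat A *v v = \<theta> *s (cmat (diagm d) *v v))"
proof -
  have "cmat (matrix_inv (diagm d) ** A) *v v = \<theta> *s v \<longleftrightarrow>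
      cmat A *v v = \<theta> *s (cmat (diagm d) *v v)" for v
  proof -
    have lhs: "(cmat (matrix_inv (diagm d) ** A) *v v)$i = (cmat A *v v)$i / of_real (d$i)" for i
      unfolding matrix_inv_diagm[OF d]
      by (simp add: cmat_def matrix_vector_mult_def matrix_matrix_mult_def
          diagm_def if_0_mult sum_divide_distrib)
    have rhs: "(cmat (diagm d) *v v)$i = of_real (d$i) * v$i" for i
      by (simp add: cmat_def matrix_vector_mult_def diagm_def if_distrib if_distribR cong: if_cong)
    show ?thesis
      using d by (simp add: vec_eq_iff lhs rhs divide_eq_eq mult_ac)
  qed
  then show ?thesis by (simp add: is_eigenvalue_def)
qed

definition gen_eigenvalue :: "real^'n^'n \<Rightarrow> real^'n \<Rightarrow> real \<Rightarrow> bool" where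
  "gen_eigenvalue A d t \<longleftrightarrow> (\<exists>w. w \<noteq> 0 \<and> A *v w = t *\<^sub>R (diagm d *v w))"

lemma is_eigenvalue_diagm_inv_of_gen:
  assumes "\<And>i. d$i \<noteq> 0" and "gen_eigenvalue A d t"
  shows "is_eigenvalue (matrix_inv (diagm d) ** A) (of_real t)"
proof -
  obtain w where w: "w \<noteq> 0" "A *v w = t *\<^sub>R (diagm d *v w)"
    using assms(2) by (auto simp: gen_eigenvalue_def)
  define v where "v = (\<chi> i. complex_of_real (w$i))"
  have "v \<noteq> 0" using w(1) by (auto simp: v_def vec_eq_iff)
  moreover have "cmat A *v v = of_real t *s (cmat (diagm d) *v v)"
    using w(2) by (simp add: v_def cmat_mult_of_real_vector vec_eq_iff)
  ultimately show ?thesis using is_eigenvalue_diagm_inv_iff[OF assms(1)] by blast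
qed

lemma eigenvalue_diagm_inv_real:
  fixes A :: "real^'n^'n"
  assumes sym: "transpose A = A" and d: "\<And>i. 0 < d$i"
    and eig: "is_eigenvalue (matrix_inv (diagm d) ** A) \<theta>"
  shows "\<theta> \<in> \<real>" and "gen_eigenvalue A d (Re \<theta>)"
proof -
  have "d$i \<noteq> 0" for i using d[of i] by simp
  then obtain v where v: "v \<noteq> 0" and e: "cmat A *v v = \<theta> *s (cmat (diagm d) *v v)"
    using eig is_eigenvalue_diagm_inv_iff by blast
  define x where "x = (\<chi> i. Re (v$i))"
  define y where "y = (\<chi> i. Im (v$i))"
  let ?D = "diagm d"
  have Ax: "A *v x = Re \<theta> *\<^sub>R (?D *v x) - Im \<theta> *\<^sub>R (?D *v y)"
    using arg_cong[OF e, of "\<lambda>u. \<chi> i. Re (u$i)"]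
    by (simp add: x_def y_def Re_cmat_mult_vector[symmetric] Im_cmat_mult_vector[symmetric] vec_eq_iff)
  have Ay: "A *v y = Im \<theta> *\<^sub>R (?D *v x) + Re \<theta> *\<^sub>R (?D *v y)"
    using arg_cong[OF e, of "\<lambda>u. \<chi> i. Im (u$i)"]
    by (simp add: x_def y_def Re_cmat_mult_vector[symmetric] Im_cmat_mult_vector[symmetric] vec_eq_iff)
  have "x \<noteq> 0 \<or> y \<noteq> 0"
    using v by (auto simp: x_def y_def vec_eq_iff complex_eq_iff)
  then have pos: "0 < x \<bullet> (?D *v x) + y \<bullet> (?D *v y)"
    using quadratic_diagm_pos[OF d] quadratic_diagm_nonneg[of d] d
    by (metis add_pos_nonneg add_nonneg_pos less_imp_le)
  \<comment> \<open>by symmetry of A and D the cross terms cancel, leaving Im \<theta> times a positive number\<close>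
  have "x \<bullet> (A *v y) = y \<bullet> (A *v x)" and "x \<bullet> (?D *v y) = y \<bullet> (?D *v x)"
    using inner_matrix_vector_symmetric sym transpose_diagm by blast+
  then have "Im \<theta> * (x \<bullet> (?D *v x) + y \<bullet> (?D *v y)) = 0"
    unfolding Ax Ay by (simp add: inner_diff_right inner_add_right algebra_simps)
  then have im: "Im \<theta> = 0" using pos by simp
  then show "\<theta> \<in> \<real>" by (simp add: complex_is_Real_iff)
  show "gen_eigenvalue A d (Re \<theta>)"
    using \<open>x \<noteq> 0 \<or> y \<noteq> 0\<close> Ax Ay im by (auto simp: gen_eigenvalue_def)
qed

lemma eigenvalues_diagm_inv:
  fixes A :: "real^'n^'n"
  assumes "transpose A = A" and "\<And>i. 0 < d$i"
  shows "{t. is_eigenvalue (matrix_inv (diagm d) ** A) (of_real t)} = {t. gen_eigenvalue A d t}"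
  using eigenvalue_diagm_inv_real[OF assms] is_eigenvalue_diagm_inv_of_gen assms(2)
  by (metis Re_complex_of_real less_irrefl)

lemma nonneg_quadratic_imp_linear_coeff_0:
  fixes b c :: real
  assumes "\<And>s. 0 \<le> 2 * s * b + s\<^sup>2 * c"
  shows "b = 0"
proof (rule ccontr)
  assume "b \<noteq> 0"
  define k where "k = \<bar>c\<bar> + 1"
  have "k > 0" by (simp add: k_def)
  have "0 \<le> 2 * (- b / k) * b + (- b / k)\<^sup>2 * c" by (rule assms)
  also have "\<dots> = (b\<^sup>2 / k\<^sup>2) * (c - 2 * k)"
    using \<open>k > 0\<close> by (simp add: field_simps power2_eq_square)
  also have "\<dots> < 0"
    using \<open>b \<noteq> 0\<close> \<open>k > 0\<close> by (intro mult_pos_neg) (auto simp: k_def)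
  finally show False by simp
qed

lemma psd_quadratic_eq_0_imp_kernel:
  fixes C :: "real^'n^'n"
  assumes sym: "transpose C = C" and psd: "\<And>x. 0 \<le> x \<bullet> (C *v x)"
    and w: "w \<bullet> (C *v w) = 0"
  shows "C *v w = 0"
proof -
  define h where "h = C *v w"
  have "0 \<le> 2 * s * (h \<bullet> h) + s\<^sup>2 * (h \<bullet> (C *v h))" for s
  proof -
    have "0 \<le> (w + s *\<^sub>R h) \<bullet> (C *v (w + s *\<^sub>R h))" by (rule psd)
    also have "\<dots> = 2 * s * (h \<bullet> h) + s\<^sup>2 * (h \<bullet> (C *v h))"
      using w inner_matrix_vector_symmetric[OF sym, of w h]
      by (simp add: h_def algebra_simps inner_add_left inner_add_right power2_eq_square)
    finally show ?thesis .
  qed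
  then have "h \<bullet> h = 0" by (rule nonneg_quadratic_imp_linear_coeff_0)
  then show ?thesis by (simp add: h_def)
qed

lemma gen_eigenvectors_orthogonal:
  fixes A :: "real^'n^'n"
  assumes sym: "transpose A = A"
    and u: "A *v u = s *\<^sub>R (diagm d *v u)" and w: "A *v w = t *\<^sub>R (diagm d *v w)"
    and "s \<noteq> t"
  shows "u \<bullet> (diagm d *v w) = 0"
proof -
  have "t * (u \<bullet> (diagm d *v w)) = u \<bullet> (A *v w)" using w by simp
  also have "\<dots> = w \<bullet> (A *v u)" by (rule inner_matrix_vector_symmetric[OF sym])
  also have "\<dots> = s * (w \<bullet> (diagm d *v u))" using u by simp
  also have "\<dots> = s * (u \<bullet> (diagm d *v w))"
    using inner_matrix_vector_symmetric[OF transpose_diagm, of w d u] by simp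
  finally show ?thesis using \<open>s \<noteq> t\<close> by simp
qed

lemma finite_gen_eigenvalues:
  fixes A :: "real^'n^'n"
  assumes sym: "transpose A = A" and d: "\<And>i. 0 < d$i"
  shows "finite {t. gen_eigenvalue A d t}" (is "finite ?S")
proof -
  define W where "W t = (SOME w. w \<noteq> 0 \<and> A *v w = t *\<^sub>R (diagm d *v w))" for t
  have W: "W t \<noteq> 0 \<and> A *v W t = t *\<^sub>R (diagm d *v W t)" if "t \<in> ?S" for t
    using that unfolding W_def gen_eigenvalue_def mem_Collect_eq by (rule someI_ex)
  \<comment> \<open>rescaling by the square root of D turns D-orthogonality into orthogonality\<close>
  define g where "g t = (\<chi> i. sqrt (d$i) * W t $ i)" for t
  have g_inner: "g s \<bullet> g t = W s \<bullet> (diagm d *v W t)" for s t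
    using d by (simp add: g_def inner_vec_def diagm_vector_mult mult_ac less_imp_le)
  have g_orth: "g s \<bullet> g t = 0" if "s \<in> ?S" "t \<in> ?S" "s \<noteq> t" for s t
    unfolding g_inner using gen_eigenvectors_orthogonal[OF sym _ _ that(3)] W that(1,2) by blast
  have g_nonzero: "g t \<bullet> g t \<noteq> 0" if "t \<in> ?S" for t
    unfolding g_inner using quadratic_diagm_pos[OF d] W[OF that] by (metis less_irrefl)
  have "inj_on g ?S"
    by (rule inj_onI) (metis g_orth g_nonzero)
  moreover have "finite (g ` ?S)"
    by (rule pairwise_orthogonal_imp_finite) (auto simp: pairwise_def orthogonal_def intro: g_orth)
  ultimately show ?thesis using finite_imageD by blast
qed

lemma transpose_diff: "transpose (A - B) = transpose A - transpose (B :: 'a::ab_group_add^'n^'m)"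
  by (simp add: transpose_def vec_eq_iff)

lemma rayleigh_min_gen_eigenvalue:
  fixes A :: "real^'n^'n"
  assumes sym: "transpose A = A" and d: "\<And>i. 0 < d$i"
  obtains t where "gen_eigenvalue A d t" and "\<And>x. t * (x \<bullet> (diagm d *v x)) \<le> x \<bullet> (A *v x)"
proof -
  define R where "R x = (x \<bullet> (A *v x)) / (x \<bullet> (diagm d *v x))" for x :: "real^'n"
  have R_scale: "R (c *\<^sub>R x) = R x" if "c \<noteq> 0" for c x
    using that by (simp add: R_def matrix_vector_mult_scaleR)
  have "x \<bullet> (diagm d *v x) \<noteq> 0" if "x \<in> sphere 0 1" for x
    using quadratic_diagm_pos[OF d, of x] that by (cases "x = 0") auto
  then have "continuous_on (sphere 0 1) R"
    unfolding R_def
    by (intro continuous_on_divide continuous_on_inner continuous_on_id linear_continuous_on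
        matrix_vector_mul_bounded_linear) auto
  moreover have "sphere (0::real^'n) 1 \<noteq> {}" by simp
  ultimately obtain w where w: "w \<in> sphere 0 1" and min: "\<And>y. y \<in> sphere 0 1 \<Longrightarrow> R w \<le> R y"
    using continuous_attains_inf[OF compact_sphere] by metis
  have "w \<noteq> 0" using w by auto
  have le: "R w * (x \<bullet> (diagm d *v x)) \<le> x \<bullet> (A *v x)" for x
  proof (cases "x = 0")
    case False
    have "R w \<le> R (inverse (norm x) *\<^sub>R x)" by (rule min) (simp add: False)
    also have "\<dots> = R x" using False by (simp add: R_scale)
    finally show ?thesis using quadratic_diagm_pos[OF d False] by (simp add: R_def pos_le_divide_eq)
  qed simp
  let ?C = "A - R w *\<^sub>R diagm d"
  have C_mult: "?C *v x = A *v x - R w *\<^sub>R (diagm d *v x)" for x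
    by (simp add: matrix_vector_mult_diff_rdistrib scaleR_matrix_vector_assoc)
  \<comment> \<open>the minimiser w is a zero of the positive semidefinite form of A - R(w) D\<close>
  have "?C *v w = 0"
  proof (rule psd_quadratic_eq_0_imp_kernel)
    show "transpose ?C = ?C" by (simp add: sym transpose_diff transpose_scalar)
    show "0 \<le> x \<bullet> (?C *v x)" for x
      using le[of x] by (simp add: C_mult inner_diff_right)
    show "w \<bullet> (?C *v w) = 0"
      unfolding C_mult inner_diff_right using quadratic_diagm_pos[OF d \<open>w \<noteq> 0\<close>]
      by (simp add: R_def)
  qed
  then have "A *v w = R w *\<^sub>R (diagm d *v w)" by (simp add: C_mult)
  then show thesis using that \<open>w \<noteq> 0\<close> le by (auto simp: gen_eigenvalue_def)
qed

lemma rayleigh_max_gen_eigenvalue: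
  fixes A :: "real^'n^'n"
  assumes sym: "transpose A = A" and d: "\<And>i. 0 < d$i"
  obtains t where "gen_eigenvalue A d t" and "\<And>x. x \<bullet> (A *v x) \<le> t * (x \<bullet> (diagm d *v x))"
proof -
  have neg_mult: "((-1) *\<^sub>R A) *v x = - (A *v x)" for x
    by (metis scaleR_matrix_vector_assoc scaleR_minus1_left)
  have "transpose ((-1) *\<^sub>R A) = (-1) *\<^sub>R A" by (simp only: sym transpose_scalar)
  then obtain t where t: "gen_eigenvalue ((-1) *\<^sub>R A) d t"
    and le: "\<And>x. t * (x \<bullet> (diagm d *v x)) \<le> x \<bullet> (((-1) *\<^sub>R A) *v x)"
    using rayleigh_min_gen_eigenvalue d by blast
  have "gen_eigenvalue A d (-t)"
    using t unfolding gen_eigenvalue_def neg_mult by (metis minus_equation_iff scaleR_minus_left)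
  moreover have "x \<bullet> (A *v x) \<le> - t * (x \<bullet> (diagm d *v x))" for x
    using le[of x] unfolding neg_mult by simp
  ultimately show thesis by (rule that)
qed

lemma gen_eigenvalue_nonneg:
  fixes A :: "real^'n^'n"
  assumes psd: "\<And>x. 0 \<le> x \<bullet> (A *v x)" and d: "\<And>i. 0 < d$i" and "gen_eigenvalue A d t"
  shows "0 \<le> t"
proof -
  obtain w where "w \<noteq> 0" and "A *v w = t *\<^sub>R (diagm d *v w)"
    using assms(3) by (auto simp: gen_eigenvalue_def)
  then have "0 \<le> t * (w \<bullet> (diagm d *v w))" using psd[of w] by simp
  then show ?thesis using quadratic_diagm_pos[OF d \<open>w \<noteq> 0\<close>] by (simp add: zero_le_mult_iff)
qed

lemma lambda_min_diagm_inv: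
  fixes A :: "real^'n^'n"
  assumes sym: "transpose A = A" and d: "\<And>i. 0 < d$i"
  shows "gen_eigenvalue A d (lambda_min (matrix_inv (diagm d) ** A))"
    and "\<And>x. lambda_min (matrix_inv (diagm d) ** A) * (x \<bullet> (diagm d *v x)) \<le> x \<bullet> (A *v x)"
proof -
  obtain t where t: "gen_eigenvalue A d t"
    and le: "\<And>x. t * (x \<bullet> (diagm d *v x)) \<le> x \<bullet> (A *v x)"
    using rayleigh_min_gen_eigenvalue[OF sym d] by blast
  have "lambda_min (matrix_inv (diagm d) ** A) = Min {t. gen_eigenvalue A d t}"
    by (simp add: lambda_min_def eigenvalues_diagm_inv[OF sym d])
  also have "\<dots> = t"
  proof (rule Min_eqI[OF finite_gen_eigenvalues[OF sym d]])
    fix s assume "s \<in> {t. gen_eigenvalue A d t}"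
    then obtain w where "w \<noteq> 0" and "A *v w = s *\<^sub>R (diagm d *v w)"
      by (auto simp: gen_eigenvalue_def)
    then have "t * (w \<bullet> (diagm d *v w)) \<le> s * (w \<bullet> (diagm d *v w))" using le[of w] by simp
    then show "t \<le> s" using quadratic_diagm_pos[OF d \<open>w \<noteq> 0\<close>] by simp
  qed (use t in simp)
  finally show "gen_eigenvalue A d (lambda_min (matrix_inv (diagm d) ** A))"
    and "\<And>x. lambda_min (matrix_inv (diagm d) ** A) * (x \<bullet> (diagm d *v x)) \<le> x \<bullet> (A *v x)"
    using t le by simp_all
qed

lemma lambda_max_diagm_inv:
  fixes A :: "real^'n^'n"
  assumes sym: "transpose A = A" and d: "\<And>i. 0 < d$i"
  shows "gen_eigenvalue A d (lambda_max (matrix_inv (diagm d) ** A))"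
    and "\<And>x. x \<bullet> (A *v x) \<le> lambda_max (matrix_inv (diagm d) ** A) * (x \<bullet> (diagm d *v x))"
proof -
  obtain t where t: "gen_eigenvalue A d t"
    and le: "\<And>x. x \<bullet> (A *v x) \<le> t * (x \<bullet> (diagm d *v x))"
    using rayleigh_max_gen_eigenvalue[OF sym d] by blast
  have "lambda_max (matrix_inv (diagm d) ** A) = Max {t. gen_eigenvalue A d t}"
    by (simp add: lambda_max_def eigenvalues_diagm_inv[OF sym d])
  also have "\<dots> = t"
  proof (rule Max_eqI[OF finite_gen_eigenvalues[OF sym d]])
    fix s assume "s \<in> {t. gen_eigenvalue A d t}"
    then obtain w where "w \<noteq> 0" and "A *v w = s *\<^sub>R (diagm d *v w)"
      by (auto simp: gen_eigenvalue_def)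
    then have "s * (w \<bullet> (diagm d *v w)) \<le> t * (w \<bullet> (diagm d *v w))" using le[of w] by simp
    then show "s \<le> t" using quadratic_diagm_pos[OF d \<open>w \<noteq> 0\<close>] by simp
  qed (use t in simp)
  finally show "gen_eigenvalue A d (lambda_max (matrix_inv (diagm d) ** A))"
    and "\<And>x. x \<bullet> (A *v x) \<le> lambda_max (matrix_inv (diagm d) ** A) * (x \<bullet> (diagm d *v x))"
    using t le by simp_all
qed

theorem eigenvalue_diagm_inv_bounds:
  fixes A :: "real^'n^'n" and d e :: "real^'n" and c :: real
  assumes sym: "transpose A = A" and psd: "\<And>x. 0 \<le> x \<bullet> (A *v x)"
    and d: "\<And>i. 0 < d$i" and de: "\<And>i. d$i \<le> e$i" and ed: "\<And>i. e$i \<le> c * d$i"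
    and eig: "is_eigenvalue (matrix_inv (diagm e) ** A) \<theta>"
  shows "\<theta> \<in> \<real>"
    and "lambda_min (matrix_inv (diagm d) ** A) / c \<le> Re \<theta>"
    and "Re \<theta> \<le> lambda_max (matrix_inv (diagm d) ** A)"
proof -
  let ?lmin = "lambda_min (matrix_inv (diagm d) ** A)"
  let ?lmax = "lambda_max (matrix_inv (diagm d) ** A)"
  have e: "0 < e$i" for i using d[of i] de[of i] by linarith
  have "0 < c"
    using d ed e by (meson less_le_trans zero_less_mult_pos2)
  show "\<theta> \<in> \<real>" using eigenvalue_diagm_inv_real(1)[OF sym e eig] .
  obtain w where "w \<noteq> 0" and w: "A *v w = Re \<theta> *\<^sub>R (diagm e *v w)"
    using eigenvalue_diagm_inv_real(2)[OF sym e eig] by (auto simp: gen_eigenvalue_def)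
  let ?Dw = "w \<bullet> (diagm d *v w)" and ?Ew = "w \<bullet> (diagm e *v w)"
  have "0 < ?Ew" using quadratic_diagm_pos[OF e \<open>w \<noteq> 0\<close>] .
  have rayleigh: "w \<bullet> (A *v w) = Re \<theta> * ?Ew" using w by simp
  have "?Dw \<le> ?Ew" using quadratic_diagm_mono[OF de] .
  have "?Ew \<le> c * ?Dw"
    unfolding quadratic_diagm sum_distrib_left
    by (intro sum_mono) (metis ed mult.assoc mult_right_mono zero_le_power2)
  have "0 \<le> ?lmin" and "0 \<le> ?lmax"
    using gen_eigenvalue_nonneg[OF psd d] lambda_min_diagm_inv(1)[OF sym d]
      lambda_max_diagm_inv(1)[OF sym d] by blast+
  have "?lmin / c * ?Ew \<le> ?lmin / c * (c * ?Dw)"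
    using \<open>?Ew \<le> c * ?Dw\<close> \<open>0 \<le> ?lmin\<close> \<open>0 < c\<close> by (intro mult_left_mono) simp_all
  also have "\<dots> = ?lmin * ?Dw" using \<open>0 < c\<close> by simp
  also have "\<dots> \<le> Re \<theta> * ?Ew" using lambda_min_diagm_inv(2)[OF sym d, of w] rayleigh by simp
  finally show "?lmin / c \<le> Re \<theta>" using \<open>0 < ?Ew\<close> by (rule mult_right_le_imp_le)
  have "Re \<theta> * ?Ew \<le> ?lmax * ?Dw" using lambda_max_diagm_inv(2)[OF sym d, of w] rayleigh by simp
  also have "\<dots> \<le> ?lmax * ?Ew" using \<open>?Dw \<le> ?Ew\<close> \<open>0 \<le> ?lmax\<close> by (rule mult_left_mono)
  finally show "Re \<theta> \<le> ?lmax" using \<open>0 < ?Ew\<close> by (rule mult_right_le_imp_le)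
qed

lemma laplacian_quadratic_nonneg:
  fixes \<Gamma> :: "real^'n^'n"
  assumes sym: "transpose \<Gamma> = \<Gamma>" and nonneg: "\<And>i j. 0 \<le> \<Gamma>$i$j"
  shows "0 \<le> x \<bullet> ((diagm (\<Gamma> *v vec 1) - \<Gamma>) *v x)"
proof -
  have Gsym: "\<Gamma>$i$j = \<Gamma>$j$i" for i j
    using arg_cong[OF sym, of "\<lambda>M. M$j$i"] by (simp add: transpose_def)
  let ?S = "\<Sum>i\<in>UNIV. \<Sum>j\<in>UNIV. \<Gamma>$i$j * (x$i)\<^sup>2"
  have "x \<bullet> (\<Gamma> *v x) = (\<Sum>i\<in>UNIV. \<Sum>j\<in>UNIV. \<Gamma>$i$j * (x$i * x$j))"
    by (simp add: inner_vec_def matrix_vector_mult_def sum_distrib_left mult_ac)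
  also have "\<dots> \<le> (\<Sum>i\<in>UNIV. \<Sum>j\<in>UNIV. \<Gamma>$i$j * (((x$i)\<^sup>2 + (x$j)\<^sup>2) / 2))"
    using sum_squares_bound by (intro sum_mono mult_left_mono nonneg) (simp add: field_simps)
  also have "\<dots> = (?S + (\<Sum>i\<in>UNIV. \<Sum>j\<in>UNIV. \<Gamma>$i$j * (x$j)\<^sup>2)) / 2"
    by (simp add: sum.distrib sum_divide_distrib distrib_left add_divide_distrib)
  also have "(\<Sum>i\<in>UNIV. \<Sum>j\<in>UNIV. \<Gamma>$i$j * (x$j)\<^sup>2) = ?S"
    by (subst sum.swap) (simp add: Gsym)
  also have "(?S + ?S) / 2 = x \<bullet> (diagm (\<Gamma> *v vec 1) *v x)"
    unfolding quadratic_diagm by (simp add: matrix_vector_mult_def sum_distrib_right)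
  finally show ?thesis by (simp add: matrix_vector_mult_diff_rdistrib inner_diff_right)
qed

lemma diagonally_dominant_row_norm_bounds:
  fixes g :: "real^'n"
  assumes g: "\<And>j. 0 \<le> g$j" and "g$i = 0" and sum_le: "(\<Sum>j\<in>UNIV. g$j) \<le> a"
  shows "a \<le> sqrt (\<Sum>j\<in>UNIV. ((if i = j then a else 0) - g$j)\<^sup>2)"
    and "sqrt (\<Sum>j\<in>UNIV. ((if i = j then a else 0) - g$j)\<^sup>2) \<le> sqrt 2 * a"
proof -
  have "0 \<le> a" using sum_le g by (meson order_trans sum_nonneg)
  have "((if i = j then a else 0) - g$j)\<^sup>2 = (if i = j then a\<^sup>2 else 0) + (g$j)\<^sup>2" for j
    using \<open>g$i = 0\<close> by (cases "i = j") simp_all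
  then have row: "(\<Sum>j\<in>UNIV. ((if i = j then a else 0) - g$j)\<^sup>2) = a\<^sup>2 + (\<Sum>j\<in>UNIV. (g$j)\<^sup>2)"
    by (simp add: sum.distrib)
  have "(g$j)\<^sup>2 \<le> g$j * a" for j
  proof -
    have "g$j \<le> (\<Sum>j\<in>UNIV. g$j)" by (rule member_le_sum) (simp_all add: g)
    then show ?thesis using g[of j] sum_le by (simp add: power2_eq_square mult_left_mono)
  qed
  then have "(\<Sum>j\<in>UNIV. (g$j)\<^sup>2) \<le> (\<Sum>j\<in>UNIV. g$j) * a"
    by (simp add: sum_mono sum_distrib_right)
  also have "\<dots> \<le> a\<^sup>2" using sum_le \<open>0 \<le> a\<close> by (simp add: power2_eq_square mult_right_mono)
  finally have "(\<Sum>j\<in>UNIV. (g$j)\<^sup>2) \<le> a\<^sup>2" .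
  show "a \<le> sqrt (\<Sum>j\<in>UNIV. ((if i = j then a else 0) - g$j)\<^sup>2)"
    unfolding row using \<open>0 \<le> a\<close> by (intro real_le_rsqrt) (simp add: sum_nonneg)
  have "sqrt (a\<^sup>2 + (\<Sum>j\<in>UNIV. (g$j)\<^sup>2)) \<le> sqrt (2 * a\<^sup>2)"
    using \<open>(\<Sum>j\<in>UNIV. (g$j)\<^sup>2) \<le> a\<^sup>2\<close> by simp
  then show "sqrt (\<Sum>j\<in>UNIV. ((if i = j then a else 0) - g$j)\<^sup>2) \<le> sqrt 2 * a"
    unfolding row using \<open>0 \<le> a\<close> by (simp add: real_sqrt_mult)
qed

theorem lemma4p9:
  fixes \<Gamma> :: "real ^ 'n ^ 'n" and lam mu :: real and \<theta> :: complex
  assumes sym: "transpose \<Gamma> = \<Gamma>"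
    and range: "\<And>i j. 0 \<le> \<Gamma> $ i $ j \<and> \<Gamma> $ i $ j \<le> 1"
    and diag0: "\<And>i. \<Gamma> $ i $ i = 0"
    and rowpos: "\<And>i. \<exists>j. j \<noteq> i \<and> \<Gamma> $ i $ j > 0"
    and lam: "lam > 0" and mu: "mu > 0"
  defines "\<eta> \<equiv> \<Gamma> *v vec 1"
  defines "L \<equiv> diagm \<eta> - \<Gamma>"
  defines "A \<equiv> lam *\<^sub>R mat 1 + mu *\<^sub>R L"
  defines "Pa \<equiv> lam *\<^sub>R mat 1 + mu *\<^sub>R diagm \<eta>"
  defines "Pb \<equiv> diagm (\<chi> i. sqrt (\<Sum>j\<in>UNIV. (A $ i $ j)\<^sup>2))"
  assumes eig: "is_eigenvalue (matrix_inv Pb ** A) \<theta>"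
  shows "\<theta> \<in> \<real> \<and>
         (1 / sqrt 2) * lambda_min (matrix_inv Pa ** A) \<le> Re \<theta> \<and>
         Re \<theta> \<le> lambda_max (matrix_inv Pa ** A)"
proof -
  have G0: "0 \<le> \<Gamma>$i$j" for i j using range by blast
  have eta: "\<eta>$i = (\<Sum>j\<in>UNIV. \<Gamma>$i$j)" for i by (simp add: \<eta>_def matrix_vector_mult_def)
  define a where "a = (\<chi> i. lam + mu * \<eta>$i)"
  have a_pos: "0 < a$i" for i
    using lam mu by (simp add: a_def eta G0 sum_nonneg add_pos_nonneg)
  have A_entry: "A$i$j = (if i = j then a$i else 0) - mu * \<Gamma>$i$j" for i j
    by (simp add: A_def L_def a_def mat_def diagm_def algebra_simps)
  have A_sym: "transpose A = A"
    using arg_cong[OF sym, of "\<lambda>M. M$_$_"] by (simp add: vec_eq_iff transpose_def A_entry)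
  have A_psd: "0 \<le> x \<bullet> (A *v x)" for x
  proof -
    have "x \<bullet> (A *v x) = lam * (x \<bullet> x) + mu * (x \<bullet> (L *v x))"
      by (simp add: A_def matrix_vector_mult_add_rdistrib scaleR_matrix_vector_assoc[symmetric]
          inner_add_right)
    then show ?thesis
      using laplacian_quadratic_nonneg[OF sym G0, of x] lam mu by (simp add: L_def \<eta>_def)
  qed
  define b where "b = (\<chi> i. sqrt (\<Sum>j\<in>UNIV. (A$i$j)\<^sup>2))"
  have "a$i \<le> b$i" and "b$i \<le> sqrt 2 * a$i" for i
    using diagonally_dominant_row_norm_bounds[of "\<chi> j. mu * \<Gamma>$i$j" i "a$i"] lam mu
    by (simp_all add: b_def A_entry G0 diag0 a_def eta sum_distrib_left)
  note bounds = eigenvalue_diagm_inv_bounds[OF A_sym A_psd a_pos this]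
  have "Pa = diagm a" by (simp add: Pa_def a_def mat_def diagm_def vec_eq_iff)
  moreover have "Pb = diagm b" by (simp add: Pb_def b_def)
  ultimately show ?thesis using bounds eig by simp
qed

end
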